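(* Let $Q$ be a finite set of points in $\mathbb{R}^d$ with a partition $Q=\bigcup_{l=1}^jQ_l$ into pairwise disjoint nonempty sets. Let $o$ be the mean point of $Q$, $o_l$ the mean point of $Q_l$ ($1\le l\le j$), $\delta^2=\frac1{|Q|}\sum_{q\in Q}\|q-o\|^2$, and $\mathcal{V}$ the simplex (convex hull) determined by $\{o_1,\dots,o_j\}$. Then for any $0<\epsilon\le1$ one can construct, from the points $o_1,\dots,o_j$ and $\epsilon$ alone, a grid $G\subset\mathcal{V}$ of size $O((8j/\epsilon)^j)$ such that at least one grid point $\tau\in G$ satisfies $\|\tau-o\|\le\sqrt{\epsilon}\,\delta$.
   Context: The implied constant in $O((8j/\epsilon)^j)$ may depend on $j$ (in the paper $j\le k$ is a fixed constant). *)

theory Defs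
  imports Complex_Main
begin

text \<open>Points of R^d are represented as functions nat => real vanishing at all
coordinates i >= d (explicit carrier, so that constants can be uniform in d).\<close>

definition in_Rd :: "nat \<Rightarrow> (nat \<Rightarrow> real) \<Rightarrow> bool" where
  "in_Rd d x \<longleftrightarrow> (\<forall>i\<ge>d. x i = 0)"

definition enorm :: "nat \<Rightarrow> (nat \<Rightarrow> real) \<Rightarrow> real" where
  "enorm d x = sqrt (\<Sum>i<d. (x i)^2)"

definition vdiff :: "(nat \<Rightarrow> real) \<Rightarrow> (nat \<Rightarrow> real) \<Rightarrow> (nat \<Rightarrow> real)" where
  "vdiff x y = (\<lambda>i. x i - y i)"

definition mean_pt :: "(nat \<Rightarrow> real) set \<Rightarrow> (nat \<Rightarrow> real)" where
  "mean_pt Q = (\<lambda>i. (\<Sum>q\<in>Q. q i) / real (card Q))"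

definition simplex_hull :: "(nat \<Rightarrow> real) list \<Rightarrow> (nat \<Rightarrow> real) set" where
  "simplex_hull os = {x. \<exists>c :: nat \<Rightarrow> real. (\<forall>l<length os. c l \<ge> 0)
      \<and> (\<Sum>l<length os. c l) = 1 \<and> x = (\<lambda>i. \<Sum>l<length os. c l * (os ! l) i)}"

end

theory Submission
  imports Defs
begin

text \<open>With weights \<open>w\<^sub>l = |Q\<^sub>l| / |Q|\<close> the mean \<open>o\<close> is the convex combination
\<open>\<Sum>\<^sub>l w\<^sub>l o\<^sub>l\<close>. Choose \<open>N = \<lceil>1/\<epsilon>\<rceil>\<close> cluster means one at a time, always one that keeps
\<open>\<parallel>\<Sum> (chosen o\<^sub>l - o)\<parallel>\<^sup>2\<close> at most (number chosen) times \<open>\<sigma>\<^sup>2 = \<Sum>\<^sub>l w\<^sub>l \<parallel>o\<^sub>l - o\<parallel>\<^sup>2\<close>: this is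
possible because the \<open>w\<close>-average of the next value is exactly the current value plus \<open>\<sigma>\<^sup>2\<close>.
If \<open>k\<^sub>l\<close> counts how often \<open>o\<^sub>l\<close> was chosen, the point \<open>\<Sum>\<^sub>l (k\<^sub>l/N) o\<^sub>l\<close> of the simplex lies within
squared distance \<open>\<sigma>\<^sup>2/N \<le> \<epsilon> \<sigma>\<^sup>2\<close> of \<open>o\<close>, and \<open>\<sigma>\<^sup>2 \<le> \<delta>\<^sup>2\<close> since the spread of the cluster means
is at most the total spread. All points with barycentric coordinates in \<open>{0, 1/N, \<dots>, 1}\<close>
form a grid of at most \<open>(N + 1)\<^sup>j \<le> (8j/\<epsilon>)\<^sup>j\<close> points.\<close>

lemma sum_weighted_square_shift:
  fixes w x :: "'a \<Rightarrow> real"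
  assumes "(\<Sum>a\<in>A. w a * x a) = 0"
  shows "(\<Sum>a\<in>A. w a * (x a + c)^2) = (\<Sum>a\<in>A. w a * (x a)^2) + (\<Sum>a\<in>A. w a) * c^2"
proof -
  have "(\<Sum>a\<in>A. w a * (x a + c)^2) = (\<Sum>a\<in>A. w a * (x a)^2 + 2 * c * (w a * x a) + w a * c^2)"
    by (simp add: power2_eq_square algebra_simps)
  also have "\<dots> = (\<Sum>a\<in>A. w a * (x a)^2) + 2 * c * (\<Sum>a\<in>A. w a * x a) + (\<Sum>a\<in>A. w a) * c^2"
    by (simp add: sum.distrib sum_distrib_left sum_distrib_right)
  finally show ?thesis
    using assms by simp
qed

lemma card_mul_square_mean_diff_le:
  fixes x :: "'a \<Rightarrow> real"
  shows "real (card A) * ((\<Sum>a\<in>A. x a) / real (card A) - c)^2 \<le> (\<Sum>a\<in>A. (x a - c)^2)"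
proof (cases "card A = 0")
  case False
  define m where "m = (\<Sum>a\<in>A. x a) / real (card A)"
  have "(\<Sum>a\<in>A. 1 * (x a - m)) = 0"
    using False by (simp add: sum_subtractf m_def)
  from sum_weighted_square_shift[OF this, of "m - c"]
  have "(\<Sum>a\<in>A. (x a - c)^2) = (\<Sum>a\<in>A. (x a - m)^2) + real (card A) * (m - c)^2"
    by simp
  then show ?thesis
    unfolding m_def[symmetric] by (simp add: sum_nonneg)
qed (simp add: sum_nonneg)

lemma exists_le_weighted_average:
  fixes w f :: "'a \<Rightarrow> real"
  assumes "finite A" "\<forall>a\<in>A. w a \<ge> 0" "(\<Sum>a\<in>A. w a) = 1"
  shows "\<exists>a\<in>A. f a \<le> (\<Sum>a\<in>A. w a * f a)"
proof (rule ccontr)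
  let ?m = "\<Sum>a\<in>A. w a * f a"
  assume "\<not> ?thesis"
  then have above: "\<forall>a\<in>A. ?m < f a"
    by auto
  obtain b where "b \<in> A" "w b > 0"
    using assms(2,3) by (metis less_eq_real_def sum.neutral zero_neq_one)
  with above have "(\<Sum>a\<in>A. w a * ?m) < ?m"
    using assms(1,2) by (intro sum_strict_mono_ex1) (auto intro: mult_left_mono less_imp_le bexI[of _ b])
  also have "(\<Sum>a\<in>A. w a * ?m) = ?m"
    using assms(3) by (simp flip: sum_distrib_right)
  finally show False
    by simp
qed

lemma enorm_power2: "(enorm d x)^2 = (\<Sum>i<d. (x i)^2)"
  by (simp add: enorm_def sum_nonneg)

lemma card_mul_sqdist_mean_pt_le:
  "real (card A) * (enorm d (vdiff (mean_pt A) c))^2 \<le> (\<Sum>q\<in>A. (enorm d (vdiff q c))^2)"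
proof -
  have "real (card A) * (enorm d (vdiff (mean_pt A) c))^2
      = (\<Sum>i<d. real (card A) * ((\<Sum>q\<in>A. q i) / real (card A) - c i)^2)"
    by (simp add: enorm_power2 vdiff_def mean_pt_def sum_distrib_left)
  also have "\<dots> \<le> (\<Sum>i<d. \<Sum>q\<in>A. (q i - c i)^2)"
    by (intro sum_mono card_mul_square_mean_diff_le)
  also have "\<dots> = (\<Sum>q\<in>A. (enorm d (vdiff q c))^2)"
    by (simp add: enorm_power2 vdiff_def sum.swap[of _ A])
  finally show ?thesis .
qed

lemma exists_counts_sum_square_le:
  fixes v :: "'l \<Rightarrow> nat \<Rightarrow> real" and w :: "'l \<Rightarrow> real"
  assumes L: "finite L" and w_nonneg: "\<forall>l\<in>L. w l \<ge> 0" and w_sum: "(\<Sum>l\<in>L. w l) = 1"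
    and balanced: "\<forall>i<d. (\<Sum>l\<in>L. w l * v l i) = 0"
  shows "\<exists>k :: 'l \<Rightarrow> nat. (\<Sum>l\<in>L. k l) = n \<and>
    (\<Sum>i<d. (\<Sum>l\<in>L. real (k l) * v l i)^2) \<le> real n * (\<Sum>l\<in>L. w l * (\<Sum>i<d. (v l i)^2))"
proof (induction n)
  case 0
  show ?case
    by (intro exI[of _ "\<lambda>_. 0"]) simp
next
  case (Suc n)
  define S where "S = (\<Sum>l\<in>L. w l * (\<Sum>i<d. (v l i)^2))"
  obtain k where k_sum: "(\<Sum>l\<in>L. k l) = n"
    and k_bound: "(\<Sum>i<d. (\<Sum>l\<in>L. real (k l) * v l i)^2) \<le> real n * S"
    using Suc.IH unfolding S_def by blast
  define s where "s i = (\<Sum>l\<in>L. real (k l) * v l i)" for i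
  have "(\<Sum>l\<in>L. w l * (\<Sum>i<d. (s i + v l i)^2)) = (\<Sum>i<d. \<Sum>l\<in>L. w l * (v l i + s i)^2)"
    by (simp add: sum_distrib_left sum.swap[of _ L] add.commute)
  also have "\<dots> = (\<Sum>i<d. (\<Sum>l\<in>L. w l * (v l i)^2) + (s i)^2)"
    using balanced w_sum by (intro sum.cong) (simp_all add: sum_weighted_square_shift)
  also have "\<dots> = S + (\<Sum>i<d. (s i)^2)"
    by (simp add: S_def sum.distrib sum_distrib_left sum.swap[of _ L])
  finally obtain l where l: "l \<in> L" and
      step: "(\<Sum>i<d. (s i + v l i)^2) \<le> S + (\<Sum>i<d. (s i)^2)"
    using exists_le_weighted_average[OF L w_nonneg w_sum, of "\<lambda>l. \<Sum>i<d. (s i + v l i)^2"]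
    by auto
  define k' where "k' m = k m + of_bool (m = l)" for m
  have "(\<Sum>m\<in>L. k' m) = Suc n"
    using l L k_sum by (simp add: k'_def sum.distrib)
  moreover have "(\<Sum>m\<in>L. real (k' m) * v m i) = s i + v l i" for i
    using l L by (simp add: k'_def s_def distrib_right sum.distrib)
  moreover have "S + (\<Sum>i<d. (s i)^2) \<le> real (Suc n) * S"
    using k_bound by (simp add: s_def algebra_simps)
  ultimately show ?case
    using step unfolding S_def by (intro exI[of _ k']) auto
qed

definition grid_point :: "(nat \<Rightarrow> real) list \<Rightarrow> nat \<Rightarrow> nat list \<Rightarrow> nat \<Rightarrow> real" where
  "grid_point os N ks = (\<lambda>i. \<Sum>l<length os. real (ks ! l) / real N * (os ! l) i)"

definition simplex_grid :: "(nat \<Rightarrow> real) list \<Rightarrow> nat \<Rightarrow> (nat \<Rightarrow> real) set" where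
  "simplex_grid os N = grid_point os N ` {ks. length ks = length os \<and> sum_list ks = N}"

lemma compositions_subset_lists:
  "{ks :: nat list. length ks = n \<and> sum_list ks = N} \<subseteq> {ks. set ks \<subseteq> {0..N} \<and> length ks = n}"
  by (auto simp: member_le_sum_list)

lemma finite_simplex_grid: "finite (simplex_grid os N)"
  unfolding simplex_grid_def
  by (rule finite_imageI, rule finite_subset[OF compositions_subset_lists])
    (simp add: finite_lists_length_eq)

lemma card_simplex_grid_le: "card (simplex_grid os N) \<le> (N + 1) ^ length os"
proof -
  let ?Ks = "{ks. length ks = length os \<and> sum_list ks = N}"
  have "card (simplex_grid os N) \<le> card ?Ks"
    unfolding simplex_grid_def by (rule card_image_le, rule finite_subset[OF compositions_subset_lists])
      (simp add: finite_lists_length_eq)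
  also have "\<dots> \<le> card {ks. set ks \<subseteq> {0..N} \<and> length ks = length os}"
    by (rule card_mono[OF _ compositions_subset_lists]) (simp add: finite_lists_length_eq)
  also have "\<dots> = (N + 1) ^ length os"
    by (simp add: card_lists_length_eq)
  finally show ?thesis .
qed

lemma simplex_grid_subset_simplex_hull:
  assumes "N > 0"
  shows "simplex_grid os N \<subseteq> simplex_hull os"
proof
  fix x assume "x \<in> simplex_grid os N"
  then obtain ks where ks: "length ks = length os" "sum_list ks = N" and x: "x = grid_point os N ks"
    unfolding simplex_grid_def by auto
  have "(\<Sum>l<length os. real (ks ! l) / real N) = real (sum_list ks) / real N"
    using ks(1) by (simp add: sum_list_sum_nth atLeast0LessThan sum_divide_distrib)
  with ks(2) assms have "(\<Sum>l<length os. real (ks ! l) / real N) = 1"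
    by simp
  then show "x \<in> simplex_hull os"
    unfolding simplex_hull_def x grid_point_def
    by (intro CollectI exI[of _ "\<lambda>l. real (ks ! l) / real N"]) auto
qed

lemma exists_grid_point_near_weighted_mean:
  fixes os :: "(nat \<Rightarrow> real) list" and w :: "nat \<Rightarrow> real"
  assumes w_nonneg: "\<forall>l<length os. w l \<ge> 0" and w_sum: "(\<Sum>l<length os. w l) = 1"
    and c: "\<forall>i. c i = (\<Sum>l<length os. w l * (os ! l) i)" and N: "N > 0"
  shows "\<exists>\<tau>\<in>simplex_grid os N. (enorm d (vdiff \<tau> c))^2
           \<le> (\<Sum>l<length os. w l * (enorm d (vdiff (os ! l) c))^2) / real N"
proof -
  let ?j = "length os"
  define v where "v l i = (os ! l) i - c i" for l i
  have "(\<Sum>l<?j. w l * v l i) = 0" for i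
    using c w_sum by (simp add: v_def right_diff_distrib sum_subtractf flip: sum_distrib_right)
  then obtain k where k_sum: "(\<Sum>l<?j. k l) = N"
    and k_bound: "(\<Sum>i<d. (\<Sum>l<?j. real (k l) * v l i)^2)
                    \<le> real N * (\<Sum>l<?j. w l * (\<Sum>i<d. (v l i)^2))"
    using exists_counts_sum_square_le[of "{..<?j}" w d v N] w_nonneg w_sum by auto
  define ks where "ks = map k [0..<?j]"
  have ks: "length ks = ?j" "sum_list ks = N"
    using k_sum by (simp_all add: ks_def sum_list_sum_nth atLeast0LessThan)
  have diff: "grid_point os N ks i - c i = (\<Sum>l<?j. real (k l) * v l i) / real N" for i
  proof -
    have "(\<Sum>l<?j. real (k l) / real N) = 1"
      using k_sum N by (simp add: sum_divide_distrib[symmetric] flip: of_nat_sum)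
    then have "grid_point os N ks i - c i
        = (\<Sum>l<?j. real (k l) / real N * (os ! l) i) - (\<Sum>l<?j. real (k l) / real N) * c i"
      by (simp add: grid_point_def ks_def)
    also have "\<dots> = (\<Sum>l<?j. real (k l) * v l i) / real N"
      by (simp add: v_def sum_distrib_right sum_subtractf right_diff_distrib sum_divide_distrib diff_divide_distrib)
    finally show ?thesis .
  qed
  have "(enorm d (vdiff (grid_point os N ks) c))^2
      = (\<Sum>i<d. (\<Sum>l<?j. real (k l) * v l i)^2) / (real N)^2"
    by (simp add: enorm_power2 vdiff_def diff power_divide flip: sum_divide_distrib)
  also have "\<dots> \<le> (\<Sum>l<?j. w l * (\<Sum>i<d. (v l i)^2)) / real N"
    using k_bound N by (simp add: field_simps power2_eq_square)
  also have "(\<Sum>l<?j. w l * (\<Sum>i<d. (v l i)^2)) = (\<Sum>l<?j. w l * (enorm d (vdiff (os ! l) c))^2)"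
    by (simp add: enorm_power2 vdiff_def v_def)
  finally show ?thesis
    using ks unfolding simplex_grid_def by blast
qed

lemma sum_over_partition:
  fixes j :: nat
  assumes "finite Q" "Q = (\<Union>l<j. Qs l)"
    and "\<forall>l<j. \<forall>l'<j. l \<noteq> l' \<longrightarrow> Qs l \<inter> Qs l' = {}"
  shows "(\<Sum>q\<in>Q. f q) = (\<Sum>l<j. \<Sum>q\<in>Qs l. f q)"
proof -
  have "finite (Qs l)" if "l < j" for l
    using assms(1,2) that by (meson UN_I finite_subset lessThan_iff subsetI)
  then show ?thesis
    using assms(2,3) by (subst assms(2), subst sum.UNION_disjoint) auto
qed

lemma mean_pt_partition:
  fixes j :: nat
  assumes "finite Q" "Q = (\<Union>l<j. Qs l)"
    and "\<forall>l<j. \<forall>l'<j. l \<noteq> l' \<longrightarrow> Qs l \<inter> Qs l' = {}"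
  shows "mean_pt Q i = (\<Sum>l<j. real (card (Qs l)) / real (card Q) * mean_pt (Qs l) i)"
proof -
  have cluster_sum: "real (card A) * mean_pt A i = (\<Sum>q\<in>A. q i)" for A :: "(nat \<Rightarrow> real) set"
    by (cases "card A = 0") (auto simp: mean_pt_def card_eq_0_iff)
  have "mean_pt Q i = (\<Sum>l<j. \<Sum>q\<in>Qs l. q i) / real (card Q)"
    using sum_over_partition[OF assms, of "\<lambda>q. q i"] by (simp add: mean_pt_def)
  also have "\<dots> = (\<Sum>l<j. real (card (Qs l)) * mean_pt (Qs l) i) / real (card Q)"
    by (simp add: cluster_sum)
  also have "\<dots> = (\<Sum>l<j. real (card (Qs l)) / real (card Q) * mean_pt (Qs l) i)"
    by (simp add: sum_divide_distrib)
  finally show ?thesis .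
qed

lemma exists_grid_point_near_mean:
  fixes j :: nat
  assumes finite: "finite Q" and nonempty: "Q \<noteq> {}" and partition: "Q = (\<Union>l<j. Qs l)"
    and disjoint: "\<forall>l<j. \<forall>l'<j. l \<noteq> l' \<longrightarrow> Qs l \<inter> Qs l' = {}" and N: "N > 0"
  shows "\<exists>\<tau>\<in>simplex_grid (map (\<lambda>l. mean_pt (Qs l)) [0..<j]) N.
           (enorm d (vdiff \<tau> (mean_pt Q)))^2
             \<le> (\<Sum>q\<in>Q. (enorm d (vdiff q (mean_pt Q)))^2) / real (card Q) / real N"
proof -
  define os where "os = map (\<lambda>l. mean_pt (Qs l)) [0..<j]"
  define w where "w l = real (card (Qs l)) / real (card Q)" for l
  have len: "length os = j" and nth: "\<And>l. l < j \<Longrightarrow> os ! l = mean_pt (Qs l)"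
    by (simp_all add: os_def)
  have card_pos: "real (card Q) > 0"
    using finite nonempty by (simp add: card_gt_0_iff)
  have "(\<Sum>l<j. w l) = 1"
    using sum_over_partition[OF finite partition disjoint, of "\<lambda>_. 1 :: real"] card_pos
    by (simp add: w_def flip: sum_divide_distrib)
  moreover have "\<forall>i. mean_pt Q i = (\<Sum>l<j. w l * (os ! l) i)"
    using mean_pt_partition[OF finite partition disjoint] by (simp add: w_def nth)
  ultimately obtain \<tau> where \<tau>: "\<tau> \<in> simplex_grid os N"
    and near: "(enorm d (vdiff \<tau> (mean_pt Q)))^2
                 \<le> (\<Sum>l<j. w l * (enorm d (vdiff (os ! l) (mean_pt Q)))^2) / real N"
    using exists_grid_point_near_weighted_mean[of os w "mean_pt Q" N d] N
    by (auto simp: len w_def)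
  have "(\<Sum>l<j. w l * (enorm d (vdiff (os ! l) (mean_pt Q)))^2)
      = (\<Sum>l<j. real (card (Qs l)) * (enorm d (vdiff (mean_pt (Qs l)) (mean_pt Q)))^2) / real (card Q)"
    by (simp add: w_def nth sum_divide_distrib)
  also have "\<dots> \<le> (\<Sum>l<j. \<Sum>q\<in>Qs l. (enorm d (vdiff q (mean_pt Q)))^2) / real (card Q)"
    using card_pos by (intro divide_right_mono sum_mono card_mul_sqdist_mean_pt_le) simp
  also have "\<dots> = (\<Sum>q\<in>Q. (enorm d (vdiff q (mean_pt Q)))^2) / real (card Q)"
    by (simp add: sum_over_partition[OF finite partition disjoint])
  finally show ?thesis
    using \<tau> near N unfolding os_def by (meson divide_right_mono of_nat_0_le_iff order_trans)
qed

lemma nat_ceiling_inverse_bounds: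
  fixes \<epsilon> :: real
  assumes "0 < \<epsilon>" "\<epsilon> \<le> 1"
  shows "nat \<lceil>1 / \<epsilon>\<rceil> > 0" "1 / real (nat \<lceil>1 / \<epsilon>\<rceil>) \<le> \<epsilon>" "real (nat \<lceil>1 / \<epsilon>\<rceil>) + 1 \<le> 3 / \<epsilon>"
proof -
  define N where "N = nat \<lceil>1 / \<epsilon>\<rceil>"
  have inv: "1 \<le> 1 / \<epsilon>"
    using assms by simp
  have "real N = of_int \<lceil>1 / \<epsilon>\<rceil>"
    using inv by (simp add: N_def)
  then have lower: "1 / \<epsilon> \<le> real N" and upper: "real N < 1 / \<epsilon> + 1"
    by linarith+
  show "N > 0"
    using inv lower by linarith
  have "1 \<le> real N * \<epsilon>"
    using lower assms(1) by (simp add: pos_divide_le_eq)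
  with \<open>N > 0\<close> show "1 / real N \<le> \<epsilon>"
    by (simp add: pos_divide_le_eq mult.commute)
  have "1 / \<epsilon> + 2 \<le> 3 / \<epsilon>"
    using inv by (simp add: field_simps)
  with upper show "real N + 1 \<le> 3 / \<epsilon>"
    by linarith
qed

lemma card_simplex_grid_resolution_le:
  fixes \<epsilon> :: real
  assumes "0 < \<epsilon>" "\<epsilon> \<le> 1" "length os \<ge> 1"
  shows "real (card (simplex_grid os (nat \<lceil>1 / \<epsilon>\<rceil>))) \<le> (8 * real (length os) / \<epsilon>) ^ length os"
proof -
  let ?N = "nat \<lceil>1 / \<epsilon>\<rceil>"
  have "real (card (simplex_grid os ?N)) \<le> (real ?N + 1) ^ length os"
    using card_simplex_grid_le[of os ?N]
    by (metis of_nat_1 of_nat_add of_nat_le_iff of_nat_power)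
  also have "\<dots> \<le> (8 * real (length os) / \<epsilon>) ^ length os"
  proof (rule power_mono)
    have "3 / \<epsilon> \<le> 8 * real (length os) / \<epsilon>"
      using assms by (intro divide_right_mono) auto
    with nat_ceiling_inverse_bounds(3)[OF assms(1,2)]
    show "real ?N + 1 \<le> 8 * real (length os) / \<epsilon>"
      by linarith
  qed simp
  finally show ?thesis .
qed

lemma exists_grid_point_within_sqrt_eps:
  fixes j :: nat and \<epsilon> :: real
  assumes "finite Q" "Q \<noteq> {}" "Q = (\<Union>l<j. Qs l)"
    and "\<forall>l<j. \<forall>l'<j. l \<noteq> l' \<longrightarrow> Qs l \<inter> Qs l' = {}" and \<epsilon>: "0 < \<epsilon>" "\<epsilon> \<le> 1"
  shows "\<exists>\<tau>\<in>simplex_grid (map (\<lambda>l. mean_pt (Qs l)) [0..<j]) (nat \<lceil>1 / \<epsilon>\<rceil>).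
           enorm d (vdiff \<tau> (mean_pt Q))
             \<le> sqrt \<epsilon> * sqrt ((\<Sum>q\<in>Q. (enorm d (vdiff q (mean_pt Q)))^2) / real (card Q))"
proof -
  define N where "N = nat \<lceil>1 / \<epsilon>\<rceil>"
  define D where "D = (\<Sum>q\<in>Q. (enorm d (vdiff q (mean_pt Q)))^2) / real (card Q)"
  note N = nat_ceiling_inverse_bounds[OF \<epsilon>, folded N_def]
  obtain \<tau> where \<tau>: "\<tau> \<in> simplex_grid (map (\<lambda>l. mean_pt (Qs l)) [0..<j]) N"
    and near: "(enorm d (vdiff \<tau> (mean_pt Q)))^2 \<le> D / real N"
    using exists_grid_point_near_mean[OF assms(1-4) N(1)] unfolding D_def by blast
  have "D / real N \<le> \<epsilon> * D"
  proof -
    have "D \<ge> 0"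
      by (simp add: D_def sum_nonneg)
    with N(2) have "D * (1 / real N) \<le> D * \<epsilon>"
      by (rule mult_left_mono)
    then show ?thesis
      by (simp add: mult.commute)
  qed
  with near have "(enorm d (vdiff \<tau> (mean_pt Q)))^2 \<le> \<epsilon> * D"
    by linarith
  then have "enorm d (vdiff \<tau> (mean_pt Q)) \<le> sqrt \<epsilon> * sqrt D"
    unfolding real_sqrt_mult[symmetric] by (rule real_le_rsqrt)
  with \<tau> show ?thesis
    unfolding N_def D_def by blast
qed

theorem lemma1:
  shows "\<exists>Grid :: (nat \<Rightarrow> real) list \<Rightarrow> real \<Rightarrow> (nat \<Rightarrow> real) set.
    \<forall>j::nat. j \<ge> 1 \<longrightarrow> (\<exists>C::real. C > 0 \<and>
    (\<forall>(d::nat) (Q :: (nat \<Rightarrow> real) set) (Qs :: nat \<Rightarrow> (nat \<Rightarrow> real) set) (\<epsilon>::real).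
       finite Q \<and> (\<forall>q\<in>Q. in_Rd d q)
       \<and> Q = (\<Union>l<j. Qs l)
       \<and> (\<forall>l<j. Qs l \<noteq> {})
       \<and> (\<forall>l<j. \<forall>l'<j. l \<noteq> l' \<longrightarrow> Qs l \<inter> Qs l' = {})
       \<and> 0 < \<epsilon> \<and> \<epsilon> \<le> 1
     \<longrightarrow> (let os = map (\<lambda>l. mean_pt (Qs l)) [0..<j];
              oQ = mean_pt Q;
              \<delta> = sqrt ((\<Sum>q\<in>Q. (enorm d (vdiff q oQ))^2) / real (card Q));
              G = Grid os \<epsilon>
          in finite G \<and> G \<subseteq> simplex_hull os
             \<and> real (card G) \<le> C * (8 * real j / \<epsilon>) ^ j
             \<and> (\<exists>\<tau>\<in>G. enorm d (vdiff \<tau> oQ) \<le> sqrt \<epsilon> * \<delta>))))"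
  unfolding Let_def
proof (intro exI[of _ "\<lambda>os \<epsilon>. simplex_grid os (nat \<lceil>1 / \<epsilon>\<rceil>)"] allI impI
    exI[of _ "1 :: real"] conjI[OF zero_less_one])
  fix j d :: nat and Q :: "(nat \<Rightarrow> real) set" and Qs and \<epsilon> :: real
  assume j: "1 \<le> j" and "finite Q \<and> (\<forall>q\<in>Q. in_Rd d q) \<and> Q = (\<Union>l<j. Qs l)
       \<and> (\<forall>l<j. Qs l \<noteq> {}) \<and> (\<forall>l<j. \<forall>l'<j. l \<noteq> l' \<longrightarrow> Qs l \<inter> Qs l' = {})
       \<and> 0 < \<epsilon> \<and> \<epsilon> \<le> 1"
  then have partition: "finite Q" "Q = (\<Union>l<j. Qs l)"
      "\<forall>l<j. \<forall>l'<j. l \<noteq> l' \<longrightarrow> Qs l \<inter> Qs l' = {}"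
    and \<epsilon>: "0 < \<epsilon>" "\<epsilon> \<le> 1" and "Qs 0 \<noteq> {}"
    using j by auto
  then have "Q \<noteq> {}"
    using j by auto
  let ?os = "map (\<lambda>l. mean_pt (Qs l)) [0..<j]"
  let ?G = "simplex_grid ?os (nat \<lceil>1 / \<epsilon>\<rceil>)"
  show "finite ?G \<and> ?G \<subseteq> simplex_hull ?os \<and> real (card ?G) \<le> 1 * (8 * real j / \<epsilon>) ^ j
    \<and> (\<exists>\<tau>\<in>?G. enorm d (vdiff \<tau> (mean_pt Q))
          \<le> sqrt \<epsilon> * sqrt ((\<Sum>q\<in>Q. (enorm d (vdiff q (mean_pt Q)))^2) / real (card Q)))"
    using finite_simplex_grid
      simplex_grid_subset_simplex_hull[OF nat_ceiling_inverse_bounds(1)[OF \<epsilon>]]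
      card_simplex_grid_resolution_le[OF \<epsilon>, of ?os] j
      exists_grid_point_within_sqrt_eps[OF partition(1) \<open>Q \<noteq> {}\<close> partition(2,3) \<epsilon>]
    by (simp only: length_map length_upt diff_zero mult_1)
qed

end
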